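(* Assume $Q^s(X^*,\xi)$ is finite for all $\xi\in\Xi^s$ and $\mathcal P^s\neq\emptyset$. Let $\mathcal Z=\{0,1\}^{\mathcal K\times\mathcal T}$ and for $z\in\mathcal Z$ let $\xi^s(z)\in\mathbb R^{\mathcal K\times\mathcal T}$ be given by $\xi^s(z)_{kt}=\xi^{Ls}_{kt}+(\xi^{Us}_{kt}-\xi^{Ls}_{kt})z_{kt}$. Then $w^s(\mathcal P^s;X^* )$ equals the optimal value of the linear program $$\max\sum_{z\in\mathcal Z}P_zQ^s(X^*,\xi^s(z))\quad\text{s.t.}\quad\sum_{z\in\mathcal Z}P_z=1,\ P_z\ge0\ \forall z,\ \ \gamma^{Ls}_{kt}\le\sum_{z\in\mathcal Z}P_z\,\xi^s(z)_{kt}\le\gamma^{Us}_{kt}\ \forall k\in\mathcal K,t\in\mathcal T.$$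
   Context: Fix finite index sets $\mathcal K,\mathcal T$, a cluster index $s$, and a fixed first-stage decision $X^*$. For a demand vector $\xi=(\xi_{kt})_{k\in\mathcal K,t\in\mathcal T}$, the recourse value is $Q^s(X^*,\xi)=\min\{C_Y^\top Y:\ B_YY\ge d-B^s_XX^*-B_\xi\xi,\ Y\ge 0\}$ (value $+\infty$ if infeasible), where $C_Y,B_Y,B_\xi,B^s_X,d$ are fixed data not depending on $\xi$. Given $\xi^{Ls}\le\xi^{Us}$ and $\gamma^{Ls}\le\gamma^{Us}$ in $\mathbb R^{\mathcal K\times\mathcal T}$, $\Xi^s=\{\xi:\xi^{Ls}_{kt}\le\xi_{kt}\le\xi^{Us}_{kt}\ \forall k,t\}$ and $\mathcal P^s$ is the set of probability distributions $\mathbb P$ supported on $\Xi^s$ with $\gamma^{Ls}_{kt}\le\mathbb E_{\mathbb P}[\xi_{kt}]\le\gamma^{Us}_{kt}$ for all $k,t$. The worst-case expected recourse value is $w^s(\mathcal P^s;X^* )=\sup_{\mathbb P\in\mathcal P^s}\mathbb E_{\mathbb P}[Q^s(X^*,\xi)]$. *)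

theory Defs
  imports "HOL-Probability.Probability"
begin

text \<open>Demand vectors are indexed by a finite index type 'i (instantiated with K x T).
  Second-stage variables Y are indexed by a finite type 'y, constraint rows by 'r,
  first-stage variables X by 'x.\<close>

definition lp_min :: "('y::finite \<Rightarrow> real) \<Rightarrow> ('r::finite \<Rightarrow> 'y \<Rightarrow> real) \<Rightarrow> ('r \<Rightarrow> real) \<Rightarrow> ereal" where
  "lp_min C BY h = Inf {ereal (\<Sum>j\<in>UNIV. C j * Y j) | Y.
      (\<forall>j. 0 \<le> Y j) \<and> (\<forall>r. h r \<le> (\<Sum>j\<in>UNIV. BY r j * Y j))}"

definition recourse ::
  "('y::finite \<Rightarrow> real) \<Rightarrow> ('r::finite \<Rightarrow> 'y \<Rightarrow> real) \<Rightarrow> ('r \<Rightarrow> 'i::finite \<Rightarrow> real)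
   \<Rightarrow> ('r \<Rightarrow> 'x::finite \<Rightarrow> real) \<Rightarrow> ('r \<Rightarrow> real) \<Rightarrow> ('x \<Rightarrow> real) \<Rightarrow> real^'i \<Rightarrow> ereal" where
  "recourse CY BY Bxi BX d X xi =
     lp_min CY BY (\<lambda>r. d r - (\<Sum>x\<in>UNIV. BX r x * X x) - (\<Sum>i\<in>UNIV. Bxi r i * xi $ i))"

definition Xi_box :: "real^'i::finite \<Rightarrow> real^'i \<Rightarrow> (real^'i) set" where
  "Xi_box xL xU = {xi. \<forall>i. xL $ i \<le> xi $ i \<and> xi $ i \<le> xU $ i}"

definition ambiguity_set ::
  "real^'i::finite \<Rightarrow> real^'i \<Rightarrow> real^'i \<Rightarrow> real^'i \<Rightarrow> (real^'i) measure set" where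
  "ambiguity_set xL xU gL gU = {M. prob_space M \<and> sets M = sets borel
      \<and> (AE xi in M. xi \<in> Xi_box xL xU)
      \<and> (\<forall>i. gL $ i \<le> (\<integral>xi. xi $ i \<partial>M) \<and> (\<integral>xi. xi $ i \<partial>M) \<le> gU $ i)}"

definition worst_case :: "(real^'i::finite \<Rightarrow> real) \<Rightarrow> (real^'i) measure set \<Rightarrow> real" where
  "worst_case f Pset = Sup ((\<lambda>M. \<integral>xi. f xi \<partial>M) ` Pset)"

definition vertex :: "real^'i::finite \<Rightarrow> real^'i \<Rightarrow> ('i \<Rightarrow> bool) \<Rightarrow> real^'i" where
  "vertex xL xU z = (\<chi> i. xL $ i + (xU $ i - xL $ i) * (if z i then 1 else 0))"

definition vertex_lp :: "(real^'i::finite \<Rightarrow> real) \<Rightarrow> real^'i \<Rightarrow> real^'i \<Rightarrow> real^'i \<Rightarrow> real^'i \<Rightarrow> real" where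
  "vertex_lp f xL xU gL gU = Sup {(\<Sum>z\<in>UNIV. P z * f (vertex xL xU z)) | P.
      (\<Sum>z\<in>UNIV. P z) = 1 \<and> (\<forall>z. 0 \<le> P z)
      \<and> (\<forall>i. gL $ i \<le> (\<Sum>z\<in>UNIV. P z * vertex xL xU z $ i)
             \<and> (\<Sum>z\<in>UNIV. P z * vertex xL xU z $ i) \<le> gU $ i)}"

end

theory Submission
  imports Defs
begin

(*
  The recourse value Q is convex in \<xi>: the LP value is jointly convex in its right-hand side,
  which is affine in \<xi>. A point \<xi> of the box is the barycentre of the vertices \<xi>(z) under
  the multilinear weights \<lambda>_z(\<xi>) = \<Prod>_i (if z_i then \<theta>_i else 1 - \<theta>_i), where \<theta>_i is the
  relative position of \<xi>_i between its bounds; hence Q(\<xi>) \<le> \<Sum>_z \<lambda>_z(\<xi>) Q(\<xi>(z)).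
  Integrating against a distribution in the ambiguity set gives weights P_z = E[\<lambda>_z(\<xi>)]
  with the same mean, so they are feasible for the vertex LP and have at least the same
  objective. Conversely each feasible P is a distribution on the vertices lying in the
  ambiguity set. Integrability of Q needs its Borel measurability, which holds because the
  LP value is lower semicontinuous: its epigraph is a finitely generated, hence closed,
  convex cone.
*)

definition lp_epigraph ::
  "('y::finite \<Rightarrow> real) \<Rightarrow> ('r::finite \<Rightarrow> 'y \<Rightarrow> real) \<Rightarrow> ((real^'r) \<times> real) set" where
  "lp_epigraph C BY = {(h, t). \<exists>Y. (\<forall>j. 0 \<le> Y j) \<and> (\<forall>r. h$r \<le> (\<Sum>j\<in>UNIV. BY r j * Y j))
      \<and> (\<Sum>j\<in>UNIV. C j * Y j) \<le> t}"

lemma convex_cone_hull_sum: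
  assumes "finite A" "\<And>i. i \<in> A \<Longrightarrow> 0 \<le> a i" "\<And>i. i \<in> A \<Longrightarrow> v i \<in> convex_cone hull G"
  shows "(\<Sum>i\<in>A. a i *\<^sub>R v i) \<in> convex_cone hull G"
  using assms
proof (induction A rule: finite_induct)
  case empty
  then show ?case by (simp add: convex_cone_hull_contains_0)
next
  case (insert x F)
  then show ?case by (simp add: convex_cone_hull_add convex_cone_hull_mul)
qed

lemma convex_cone_lp_epigraph: "convex_cone (lp_epigraph C BY)"
  unfolding convex_cone_iff
proof (intro conjI ballI allI impI)
  show "0 \<in> lp_epigraph C BY"
    unfolding lp_epigraph_def zero_prod_def by (auto intro!: exI[of _ "\<lambda>_. 0"])
next
  fix x y assume "x \<in> lp_epigraph C BY" "y \<in> lp_epigraph C BY"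
  then obtain h1 t1 Y1 h2 t2 Y2 where
      x: "x = (h1, t1)" "\<forall>j. 0 \<le> Y1 j" "\<forall>r. h1$r \<le> (\<Sum>j\<in>UNIV. BY r j * Y1 j)" "(\<Sum>j\<in>UNIV. C j * Y1 j) \<le> t1"
    and y: "y = (h2, t2)" "\<forall>j. 0 \<le> Y2 j" "\<forall>r. h2$r \<le> (\<Sum>j\<in>UNIV. BY r j * Y2 j)" "(\<Sum>j\<in>UNIV. C j * Y2 j) \<le> t2"
    unfolding lp_epigraph_def by auto
  then show "x + y \<in> lp_epigraph C BY"
    unfolding lp_epigraph_def
    by (auto intro!: exI[of _ "\<lambda>j. Y1 j + Y2 j"] simp: distrib_left sum.distrib add_mono)
next
  fix x and c :: real assume "x \<in> lp_epigraph C BY" "0 \<le> c"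
  then obtain h t Y where
      x: "x = (h, t)" "\<forall>j. 0 \<le> Y j" "\<forall>r. h$r \<le> (\<Sum>j\<in>UNIV. BY r j * Y j)" "(\<Sum>j\<in>UNIV. C j * Y j) \<le> t"
    unfolding lp_epigraph_def by auto
  have scale: "(\<Sum>j\<in>UNIV. A j * (c * Y j)) = c * (\<Sum>j\<in>UNIV. A j * Y j)" for A
    by (simp add: sum_distrib_left mult.left_commute)
  show "c *\<^sub>R x \<in> lp_epigraph C BY"
    unfolding lp_epigraph_def using x \<open>0 \<le> c\<close>
    by (auto intro!: exI[of _ "\<lambda>j. c * Y j"] simp: scale mult_left_mono)
qed

lemma lp_epigraph_eq_convex_cone_hull:
  fixes BY :: "'r::finite \<Rightarrow> 'y::finite \<Rightarrow> real"
  shows "lp_epigraph C BY = convex_cone hull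
     (range (\<lambda>j. (\<chi> r. BY r j, C j)) \<union> range (\<lambda>r. (- axis r 1, 0)) \<union> {(0, 1)})"
  (is "_ = convex_cone hull ?G")
proof
  show "convex_cone hull ?G \<subseteq> lp_epigraph C BY"
  proof (rule hull_minimal)
    have "(\<chi> r. BY r j, C j) \<in> lp_epigraph C BY" for j
      unfolding lp_epigraph_def
      by (auto intro!: exI[of _ "\<lambda>k. if k = j then 1 else 0"] simp: if_distrib cong: if_cong)
    moreover have "(- axis r 1, 0) \<in> lp_epigraph C BY" "(0, 1) \<in> lp_epigraph C BY" for r
      unfolding lp_epigraph_def by (auto intro!: exI[of _ "\<lambda>_. 0"] simp: axis_def)
    ultimately show "?G \<subseteq> lp_epigraph C BY" by blast
  qed (rule convex_cone_lp_epigraph)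
next
  show "lp_epigraph C BY \<subseteq> convex_cone hull ?G"
  proof
    fix p assume "p \<in> lp_epigraph C BY"
    then obtain h t Y where p: "p = (h, t)" and Y: "\<forall>j. 0 \<le> Y j"
        "\<forall>r. h$r \<le> (\<Sum>j\<in>UNIV. BY r j * Y j)" "(\<Sum>j\<in>UNIV. C j * Y j) \<le> t"
      unfolding lp_epigraph_def by auto
    define slack where "slack r = (\<Sum>j\<in>UNIV. BY r j * Y j) - h$r" for r
    have "p = (\<Sum>j\<in>UNIV. Y j *\<^sub>R (\<chi> r. BY r j, C j)) + (\<Sum>r\<in>UNIV. slack r *\<^sub>R (- axis r 1, 0))
           + (t - (\<Sum>j\<in>UNIV. C j * Y j)) *\<^sub>R (0, 1)" (is "p = ?S")
    proof (rule prod_eqI)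
      have "h $ k = (\<Sum>j\<in>UNIV. Y j * BY k j) + (\<Sum>r\<in>UNIV. slack r * (- axis r 1 $ k))" for k
      proof -
        have "(\<Sum>r\<in>UNIV. slack r * (- axis r 1 $ k)) = - slack k"
          by (simp add: axis_def if_distrib cong: if_cong)
        then show ?thesis by (simp add: slack_def mult.commute)
      qed
      then show "fst p = fst ?S"
        by (simp add: p fst_sum vec_eq_iff)
      show "snd p = snd ?S"
        by (simp add: p snd_sum mult.commute)
    qed
    moreover have "(\<Sum>j\<in>UNIV. Y j *\<^sub>R (\<chi> r. BY r j, C j)) \<in> convex_cone hull ?G"
      by (rule convex_cone_hull_sum) (auto simp: Y hull_inc)
    moreover have "(\<Sum>r\<in>UNIV. slack r *\<^sub>R (- axis r 1, 0)) \<in> convex_cone hull ?G"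
      by (rule convex_cone_hull_sum) (auto simp: Y slack_def hull_inc)
    moreover have "(t - (\<Sum>j\<in>UNIV. C j * Y j)) *\<^sub>R (0::real^'r, 1::real) \<in> convex_cone hull ?G"
      using Y by (intro convex_cone_hull_mul) (auto simp: hull_inc)
    ultimately show "p \<in> convex_cone hull ?G"
      by (simp only: convex_cone_hull_add)
  qed
qed

lemma closed_lp_epigraph: "closed (lp_epigraph C BY)"
  unfolding lp_epigraph_eq_convex_cone_hull by (rule closed_convex_cone_hull) auto

lemma lp_min_le_cost:
  assumes "\<forall>j. 0 \<le> Y j" "\<forall>r. h r \<le> (\<Sum>j\<in>UNIV. BY r j * Y j)"
  shows "lp_min C BY h \<le> ereal (\<Sum>j\<in>UNIV. C j * Y j)"
  unfolding lp_min_def using assms by (intro Inf_lower) auto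

lemma lp_min_lessE:
  assumes "lp_min C BY h < ereal a"
  obtains Y where "\<forall>j. 0 \<le> Y j" "\<forall>r. h r \<le> (\<Sum>j\<in>UNIV. BY r j * Y j)" "(\<Sum>j\<in>UNIV. C j * Y j) < a"
  using assms unfolding lp_min_def Inf_less_iff by auto

lemma lp_min_le_iff_mem_lp_epigraph:
  "lp_min C BY (\<lambda>r. h$r) \<le> ereal t \<longleftrightarrow> (h, t) \<in> lp_epigraph C BY"
proof
  assume "(h, t) \<in> lp_epigraph C BY"
  then obtain Y where Y: "\<forall>j. 0 \<le> Y j" "\<forall>r. h$r \<le> (\<Sum>j\<in>UNIV. BY r j * Y j)" "(\<Sum>j\<in>UNIV. C j * Y j) \<le> t"
    unfolding lp_epigraph_def by auto
  then show "lp_min C BY (\<lambda>r. h$r) \<le> ereal t"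
    using lp_min_le_cost[OF Y(1,2), of C] by (simp add: order_trans)
next
  assume le: "lp_min C BY (\<lambda>r. h$r) \<le> ereal t"
  have "(h, t + inverse (real (Suc n))) \<in> lp_epigraph C BY" for n
  proof -
    have "lp_min C BY (\<lambda>r. h$r) < ereal (t + inverse (real (Suc n)))"
      using le by (rule le_less_trans) simp
    then show ?thesis
      by (elim lp_min_lessE) (auto simp: lp_epigraph_def)
  qed
  moreover have "(\<lambda>n. (h, t + inverse (real (Suc n)))) \<longlonglongrightarrow> (h, t)"
    by (intro tendsto_Pair tendsto_const LIMSEQ_inverse_real_of_nat_add)
  ultimately show "(h, t) \<in> lp_epigraph C BY"
    by (rule closed_sequentially[OF closed_lp_epigraph])
qed

lemma closed_lp_min_sublevel: "closed {h. lp_min C BY (\<lambda>r. h$r) \<le> y}"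
proof -
  have closed_real: "closed {h. lp_min C BY (\<lambda>r. h$r) \<le> ereal t}" for t
  proof -
    have "{h. lp_min C BY (\<lambda>r. h$r) \<le> ereal t} = (\<lambda>h. (h, t)) -` lp_epigraph C BY"
      by (auto simp: lp_min_le_iff_mem_lp_epigraph)
    then show ?thesis
      by (simp add: closed_vimage closed_lp_epigraph continuous_on_Pair)
  qed
  show ?thesis
  proof (cases y)
    case MInf
    have "{h. lp_min C BY (\<lambda>r. h$r) \<le> y} = (\<Inter>t. {h. lp_min C BY (\<lambda>r. h$r) \<le> ereal t})"
      using MInf ereal_bot by auto
    then show ?thesis
      using closed_real by (simp add: closed_INT)
  qed (use closed_real in simp_all)
qed

lemma borel_measurable_lp_min:
  "(\<lambda>h::real^'r::finite. lp_min C BY (\<lambda>r. h$r)) \<in> borel_measurable borel"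
  by (rule borel_measurableI_le) (simp add: borel_closed closed_lp_min_sublevel)

lemma lp_min_convex_combination:
  assumes "lp_min C BY h1 = ereal q1" "lp_min C BY h2 = ereal q2" "0 \<le> t" "t \<le> 1"
  shows "lp_min C BY (\<lambda>r. (1 - t) * h1 r + t * h2 r) \<le> ereal ((1 - t) * q1 + t * q2)"
proof (rule ereal_le_epsilon2)
  fix e :: real assume "0 < e"
  then have "lp_min C BY h1 < ereal (q1 + e)" "lp_min C BY h2 < ereal (q2 + e)"
    using assms(1,2) by simp_all
  then obtain Y1 Y2 where
      Y1: "\<forall>j. 0 \<le> Y1 j" "\<forall>r. h1 r \<le> (\<Sum>j\<in>UNIV. BY r j * Y1 j)" "(\<Sum>j\<in>UNIV. C j * Y1 j) < q1 + e"
    and Y2: "\<forall>j. 0 \<le> Y2 j" "\<forall>r. h2 r \<le> (\<Sum>j\<in>UNIV. BY r j * Y2 j)" "(\<Sum>j\<in>UNIV. C j * Y2 j) < q2 + e"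
    by (elim lp_min_lessE)
  define Y where "Y j = (1 - t) * Y1 j + t * Y2 j" for j
  have lin: "(\<Sum>j\<in>UNIV. A j * Y j) = (1 - t) * (\<Sum>j\<in>UNIV. A j * Y1 j) + t * (\<Sum>j\<in>UNIV. A j * Y2 j)" for A
    by (simp add: Y_def distrib_left sum.distrib sum_distrib_left mult.left_commute)
  have "\<forall>j. 0 \<le> Y j"
    using Y1(1) Y2(1) assms(3,4) by (simp add: Y_def)
  moreover have "\<forall>r. (1 - t) * h1 r + t * h2 r \<le> (\<Sum>j\<in>UNIV. BY r j * Y j)"
    using Y1(2) Y2(2) assms(3,4) by (auto simp: lin intro!: add_mono mult_left_mono)
  ultimately have "lp_min C BY (\<lambda>r. (1 - t) * h1 r + t * h2 r) \<le> ereal (\<Sum>j\<in>UNIV. C j * Y j)"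
    by (rule lp_min_le_cost)
  also have "(\<Sum>j\<in>UNIV. C j * Y j) \<le> (1 - t) * (q1 + e) + t * (q2 + e)"
    using Y1 Y2 assms(3,4) by (auto simp: lin intro!: add_mono mult_left_mono)
  finally show "lp_min C BY (\<lambda>r. (1 - t) * h1 r + t * h2 r) \<le> ereal ((1 - t) * q1 + t * q2) + ereal e"
    by (simp add: algebra_simps)
qed

definition recourse_rhs ::
  "('r::finite \<Rightarrow> 'i::finite \<Rightarrow> real) \<Rightarrow> ('r \<Rightarrow> 'x::finite \<Rightarrow> real) \<Rightarrow> ('r \<Rightarrow> real) \<Rightarrow> ('x \<Rightarrow> real)
    \<Rightarrow> real^'i \<Rightarrow> real^'r" where
  "recourse_rhs Bxi BX d X xi = (\<chi> r. d r - (\<Sum>x\<in>UNIV. BX r x * X x) - (\<Sum>i\<in>UNIV. Bxi r i * xi $ i))"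

lemma recourse_eq_lp_min_rhs:
  "recourse CY BY Bxi BX d X xi = lp_min CY BY (\<lambda>r. recourse_rhs Bxi BX d X xi $ r)"
  by (simp add: recourse_def recourse_rhs_def)

lemma recourse_rhs_convex_combination:
  "recourse_rhs Bxi BX d X ((1 - t) *\<^sub>R x + t *\<^sub>R y) $ r
     = (1 - t) * recourse_rhs Bxi BX d X x $ r + t * recourse_rhs Bxi BX d X y $ r"
proof -
  have "(\<Sum>i\<in>UNIV. Bxi r i * ((1 - t) * x $ i + t * y $ i))
      = (1 - t) * (\<Sum>i\<in>UNIV. Bxi r i * x $ i) + t * (\<Sum>i\<in>UNIV. Bxi r i * y $ i)"
    by (simp add: distrib_left sum.distrib sum_distrib_left mult.left_commute)
  then show ?thesis
    by (simp add: recourse_rhs_def algebra_simps)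
qed

lemma borel_measurable_recourse:
  "(\<lambda>xi. real_of_ereal (recourse CY BY Bxi BX d X xi)) \<in> borel_measurable borel"
proof -
  have "recourse_rhs Bxi BX d X \<in> borel_measurable borel"
    unfolding recourse_rhs_def by (intro borel_measurable_continuous_onI continuous_intros)
  from measurable_compose[OF this borel_measurable_lp_min]
  show ?thesis
    unfolding recourse_eq_lp_min_rhs by (rule borel_measurable_real_of_ereal)
qed

lemma convex_on_recourse:
  assumes "convex S" and finite: "\<forall>xi\<in>S. \<bar>recourse CY BY Bxi BX d X xi\<bar> \<noteq> \<infinity>"
  shows "convex_on S (\<lambda>xi. real_of_ereal (recourse CY BY Bxi BX d X xi))"
proof (rule convex_onI[OF _ assms(1)])
  let ?R = "recourse CY BY Bxi BX d X"
  fix t :: real and x y assume t: "0 < t" "t < 1" and "x \<in> S" "y \<in> S"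
  then have mix: "(1 - t) *\<^sub>R x + t *\<^sub>R y \<in> S"
    using \<open>convex S\<close> by (simp add: convex_def)
  have R_real: "?R z = ereal (real_of_ereal (?R z))" if "z \<in> S" for z
    using finite that by (simp add: ereal_real)
  have "?R ((1 - t) *\<^sub>R x + t *\<^sub>R y) \<le> ereal ((1 - t) * real_of_ereal (?R x) + t * real_of_ereal (?R y))"
    unfolding recourse_eq_lp_min_rhs recourse_rhs_convex_combination
    by (rule lp_min_convex_combination)
      (use t R_real[OF \<open>x \<in> S\<close>] R_real[OF \<open>y \<in> S\<close>] in \<open>simp_all add: recourse_eq_lp_min_rhs\<close>)
  then show "real_of_ereal (?R ((1 - t) *\<^sub>R x + t *\<^sub>R y))
      \<le> (1 - t) * real_of_ereal (?R x) + t * real_of_ereal (?R y)"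
    using R_real[OF mix] by (metis ereal_less_eq(3))
qed

lemma Xi_box_eq_cbox: "Xi_box xL xU = cbox xL xU"
  by (auto simp: Xi_box_def mem_box_cart)

lemma vertex_in_Xi_box: "\<forall>i. xL $ i \<le> xU $ i \<Longrightarrow> vertex xL xU z \<in> Xi_box xL xU"
  by (auto simp: vertex_def Xi_box_def)

lemma sum_fun_bool_prod:
  fixes g :: "'i::finite \<Rightarrow> bool \<Rightarrow> 'a::comm_semiring_1"
  shows "(\<Sum>z\<in>UNIV. \<Prod>i\<in>UNIV. g i (z i)) = (\<Prod>i\<in>UNIV. g i True + g i False)"
proof -
  have "(\<Prod>i\<in>UNIV. \<Sum>b\<in>UNIV. g i b) = (\<Sum>z\<in>UNIV. \<Prod>i\<in>UNIV. g i (z i))"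
    using prod_sum_PiE[of UNIV "\<lambda>_. UNIV" g] by (simp add: PiE_UNIV)
  then show ?thesis
    by (simp add: UNIV_bool add.commute)
qed

definition box_fraction :: "real^'i::finite \<Rightarrow> real^'i \<Rightarrow> 'i \<Rightarrow> real^'i \<Rightarrow> real" where
  "box_fraction xL xU i xi = (if xL$i < xU$i then (xi$i - xL$i) / (xU$i - xL$i) else 0)"

definition vertex_weight :: "real^'i::finite \<Rightarrow> real^'i \<Rightarrow> ('i \<Rightarrow> bool) \<Rightarrow> real^'i \<Rightarrow> real" where
  "vertex_weight xL xU z xi =
     (\<Prod>i\<in>UNIV. if z i then box_fraction xL xU i xi else 1 - box_fraction xL xU i xi)"

lemma box_fraction_bounds:
  assumes "xi \<in> Xi_box xL xU"
  shows "0 \<le> box_fraction xL xU i xi" "box_fraction xL xU i xi \<le> 1"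
  using assms by (auto simp: box_fraction_def Xi_box_def divide_le_eq_1)

lemma sum_vertex_weight: "(\<Sum>z\<in>UNIV. vertex_weight xL xU z xi) = 1"
  unfolding vertex_weight_def
  using sum_fun_bool_prod[of "\<lambda>i b. if b then box_fraction xL xU i xi else 1 - box_fraction xL xU i xi"]
  by simp

lemma sum_vertex_weight_coordinate:
  "(\<Sum>z\<in>UNIV. vertex_weight xL xU z xi * (if z j then 1 else 0)) = box_fraction xL xU j xi"
proof -
  let ?g = "\<lambda>i b. (if b then box_fraction xL xU i xi else 1 - box_fraction xL xU i xi)
                  * (if i = j then (if b then 1 else 0) else 1)"
  have "vertex_weight xL xU z xi * (if z j then 1 else 0) = (\<Prod>i\<in>UNIV. ?g i (z i))" for z
    by (simp add: vertex_weight_def prod.distrib prod.delta')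
  then have "(\<Sum>z\<in>UNIV. vertex_weight xL xU z xi * (if z j then 1 else 0))
      = (\<Prod>i\<in>UNIV. ?g i True + ?g i False)"
    using sum_fun_bool_prod[of ?g] by simp
  also have "\<dots> = (\<Prod>i\<in>UNIV. if i = j then box_fraction xL xU j xi else 1)"
    by (rule prod.cong) auto
  finally show ?thesis
    by (simp add: prod.delta')
qed

lemma vertex_weight_nonneg: "xi \<in> Xi_box xL xU \<Longrightarrow> 0 \<le> vertex_weight xL xU z xi"
  unfolding vertex_weight_def using box_fraction_bounds by (intro prod_nonneg) auto

lemma vertex_weight_le_1: "xi \<in> Xi_box xL xU \<Longrightarrow> vertex_weight xL xU z xi \<le> 1"
  using member_le_sum[of z UNIV "\<lambda>z. vertex_weight xL xU z xi"]
  by (simp add: vertex_weight_nonneg sum_vertex_weight)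

lemma continuous_on_vertex_weight: "continuous_on UNIV (vertex_weight xL xU z)"
proof -
  have "box_fraction xL xU i = (\<lambda>xi. (if xL$i < xU$i then 1 / (xU$i - xL$i) else 0) * (xi$i - xL$i))" for i
    by (auto simp: box_fraction_def)
  then have "continuous_on UNIV (box_fraction xL xU i)" for i
    by (simp add: continuous_intros)
  then have "continuous_on UNIV (\<lambda>xi. if z i then box_fraction xL xU i xi else 1 - box_fraction xL xU i xi)" for i
    by (cases "z i") (simp_all add: continuous_intros)
  then show ?thesis
    unfolding vertex_weight_def by (intro continuous_on_prod)
qed

lemma sum_vertex_weight_vertex:
  assumes "xi \<in> Xi_box xL xU"
  shows "(\<Sum>z\<in>UNIV. vertex_weight xL xU z xi * vertex xL xU z $ j) = xi $ j"
proof -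
  have "(\<Sum>z\<in>UNIV. vertex_weight xL xU z xi * vertex xL xU z $ j)
      = (\<Sum>z\<in>UNIV. xL$j * vertex_weight xL xU z xi
                   + (xU$j - xL$j) * (vertex_weight xL xU z xi * (if z j then 1 else 0)))"
    by (rule sum.cong) (auto simp: vertex_def algebra_simps)
  also have "\<dots> = xL$j + (xU$j - xL$j) * box_fraction xL xU j xi"
    by (simp add: sum.distrib sum_distrib_left[symmetric] sum_vertex_weight sum_vertex_weight_coordinate)
  also have "\<dots> = xi $ j"
    using assms by (auto simp: box_fraction_def Xi_box_def) (meson order.antisym not_le order.trans)
  finally show ?thesis .
qed

lemma sum_vertex_weight_scaleR_vertex:
  "xi \<in> Xi_box xL xU \<Longrightarrow> (\<Sum>z\<in>UNIV. vertex_weight xL xU z xi *\<^sub>R vertex xL xU z) = xi"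
  by (simp add: vec_eq_iff sum_vertex_weight_vertex)

lemma convex_on_Xi_box_le_vertex_average:
  assumes "convex_on (Xi_box xL xU) f" "\<forall>i. xL$i \<le> xU$i" "xi \<in> Xi_box xL xU"
  shows "f xi \<le> (\<Sum>z\<in>UNIV. vertex_weight xL xU z xi * f (vertex xL xU z))"
proof -
  have "f (\<Sum>z\<in>UNIV. vertex_weight xL xU z xi *\<^sub>R vertex xL xU z)
      \<le> (\<Sum>z\<in>UNIV. vertex_weight xL xU z xi * f (vertex xL xU z))"
    using assms by (intro convex_on_sum)
      (auto simp: sum_vertex_weight vertex_weight_nonneg vertex_in_Xi_box)
  then show ?thesis
    using assms(3) by (simp add: sum_vertex_weight_scaleR_vertex)
qed

lemma convex_on_Xi_box_bounded:
  assumes convex: "convex_on (Xi_box xL xU) f" and le: "\<forall>i. xL$i \<le> xU$i"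
  obtains K where "\<forall>xi\<in>Xi_box xL xU. \<bar>f xi\<bar> \<le> K"
proof
  define K\<^sub>v where "K\<^sub>v = (\<Sum>z\<in>UNIV. \<bar>f (vertex xL xU z)\<bar>)"
  have vertex_le: "f (vertex xL xU z) \<le> K\<^sub>v" for z
    unfolding K\<^sub>v_def
    using member_le_sum[of z UNIV "\<lambda>z. \<bar>f (vertex xL xU z)\<bar>"] by simp
  have upper: "f xi \<le> K\<^sub>v" if xi: "xi \<in> Xi_box xL xU" for xi
  proof -
    have "(\<Sum>z\<in>UNIV. vertex_weight xL xU z xi * f (vertex xL xU z))
        \<le> (\<Sum>z\<in>UNIV. vertex_weight xL xU z xi * K\<^sub>v)"
      using vertex_le vertex_weight_nonneg[OF xi] by (intro sum_mono mult_left_mono) auto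
    then show ?thesis
      using convex_on_Xi_box_le_vertex_average[OF convex le xi]
      by (simp add: sum_distrib_right[symmetric] sum_vertex_weight)
  qed
  define c where "c = (1/2::real) *\<^sub>R (xL + xU)"
  \<comment> \<open>c is the midpoint of xi and its mirror image xL + xU - xi, which also lies in the box\<close>
  have lower: "2 * f c - K\<^sub>v \<le> f xi" if xi: "xi \<in> Xi_box xL xU" for xi
  proof -
    define xi' where "xi' = xL + xU - xi"
    have xi': "xi' \<in> Xi_box xL xU"
      using xi by (auto simp: xi'_def Xi_box_def)
    have "c = (1 - 1/2::real) *\<^sub>R xi + (1/2::real) *\<^sub>R xi'"
      by (simp add: c_def xi'_def vec_eq_iff algebra_simps)
    then have "f c \<le> (1 - 1/2) * f xi + (1/2) * f xi'"
      using convex_onD[OF convex, of "1/2" xi xi'] xi xi' by simp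
    then show ?thesis
      using upper[OF xi'] by simp
  qed
  show "\<forall>xi\<in>Xi_box xL xU. \<bar>f xi\<bar> \<le> K\<^sub>v + 2 * \<bar>f c\<bar>"
    using upper lower by (force simp: abs_le_iff K\<^sub>v_def intro: sum_nonneg)
qed

definition vertex_lp_feasible ::
  "real^'i::finite \<Rightarrow> real^'i \<Rightarrow> real^'i \<Rightarrow> real^'i \<Rightarrow> (('i \<Rightarrow> bool) \<Rightarrow> real) \<Rightarrow> bool" where
  "vertex_lp_feasible xL xU gL gU P \<longleftrightarrow> (\<Sum>z\<in>UNIV. P z) = 1 \<and> (\<forall>z. 0 \<le> P z)
      \<and> (\<forall>i. gL $ i \<le> (\<Sum>z\<in>UNIV. P z * vertex xL xU z $ i)
             \<and> (\<Sum>z\<in>UNIV. P z * vertex xL xU z $ i) \<le> gU $ i)"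

lemma vertex_lp_eq_Sup_feasible:
  "vertex_lp f xL xU gL gU
     = Sup {(\<Sum>z\<in>UNIV. P z * f (vertex xL xU z)) | P. vertex_lp_feasible xL xU gL gU P}"
  unfolding vertex_lp_def vertex_lp_feasible_def ..

lemma vertex_lp_objective_le:
  assumes "vertex_lp_feasible xL xU gL gU P"
  shows "(\<Sum>z\<in>UNIV. P z * f (vertex xL xU z)) \<le> (\<Sum>z\<in>UNIV. \<bar>f (vertex xL xU z)\<bar>)"
proof -
  have "(\<Sum>z\<in>UNIV. P z * f (vertex xL xU z)) \<le> (\<Sum>z\<in>UNIV. P z * (\<Sum>z\<in>UNIV. \<bar>f (vertex xL xU z)\<bar>))"
    using assms member_le_sum[of _ UNIV "\<lambda>z. \<bar>f (vertex xL xU z)\<bar>"]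
    by (intro sum_mono mult_left_mono) (auto simp: vertex_lp_feasible_def intro: order.trans[OF abs_ge_self])
  then show ?thesis
    using assms by (simp add: vertex_lp_feasible_def sum_distrib_right[symmetric])
qed

lemma measurable_ambiguity_set:
  "M \<in> ambiguity_set xL xU gL gU \<Longrightarrow> measurable M N = measurable borel N"
  by (rule measurable_cong_sets) (simp_all add: ambiguity_set_def)

lemma integrable_ambiguity_set:
  fixes g :: "real^'i::finite \<Rightarrow> real"
  assumes "M \<in> ambiguity_set xL xU gL gU" "g \<in> borel_measurable borel"
    and "\<forall>xi\<in>Xi_box xL xU. \<bar>g xi\<bar> \<le> K"
  shows "integrable M g"
proof -
  interpret prob_space M
    using assms(1) by (simp add: ambiguity_set_def)
  have "AE xi in M. xi \<in> Xi_box xL xU"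
    using assms(1) by (simp add: ambiguity_set_def)
  then show ?thesis
    using assms(2,3) by (intro integrable_const_bound[where B=K])
      (auto simp: measurable_ambiguity_set[OF assms(1)] elim!: AE_mp)
qed

lemma integrable_vertex_weight:
  "M \<in> ambiguity_set xL xU gL gU \<Longrightarrow> integrable M (vertex_weight xL xU z)"
  by (rule integrable_ambiguity_set[where K=1])
    (auto intro: borel_measurable_continuous_onI continuous_on_vertex_weight
      simp: vertex_weight_nonneg vertex_weight_le_1)

lemma vertex_lp_feasible_expected_vertex_weight:
  assumes M: "M \<in> ambiguity_set xL xU gL gU"
  shows "vertex_lp_feasible xL xU gL gU (\<lambda>z. \<integral>xi. vertex_weight xL xU z xi \<partial>M)"
proof -
  interpret prob_space M
    using M by (simp add: ambiguity_set_def)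
  have box: "AE xi in M. xi \<in> Xi_box xL xU"
    using M by (simp add: ambiguity_set_def)
  have "(\<Sum>z\<in>UNIV. \<integral>xi. vertex_weight xL xU z xi \<partial>M) = (\<integral>xi. (\<Sum>z\<in>UNIV. vertex_weight xL xU z xi) \<partial>M)"
    by (simp add: integrable_vertex_weight[OF M])
  also have "\<dots> = 1"
    by (simp add: sum_vertex_weight prob_space)
  finally have "(\<Sum>z\<in>UNIV. \<integral>xi. vertex_weight xL xU z xi \<partial>M) = 1" .
  moreover have "\<forall>z. 0 \<le> (\<integral>xi. vertex_weight xL xU z xi \<partial>M)"
    using box by (auto intro!: integral_nonneg_AE elim!: AE_mp simp: vertex_weight_nonneg)
  moreover have "(\<Sum>z\<in>UNIV. (\<integral>xi. vertex_weight xL xU z xi \<partial>M) * vertex xL xU z $ i) = (\<integral>xi. xi $ i \<partial>M)" for i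
  proof -
    have "(\<Sum>z\<in>UNIV. (\<integral>xi. vertex_weight xL xU z xi \<partial>M) * vertex xL xU z $ i)
        = (\<integral>xi. (\<Sum>z\<in>UNIV. vertex_weight xL xU z xi * vertex xL xU z $ i) \<partial>M)"
      by (simp add: integrable_vertex_weight[OF M])
    also have "\<dots> = (\<integral>xi. xi $ i \<partial>M)"
      using box by (intro integral_cong_AE)
        (auto simp: measurable_ambiguity_set[OF M] sum_vertex_weight_vertex elim!: AE_mp
          intro!: borel_measurable_continuous_onI continuous_on_vertex_weight continuous_intros)
    finally show ?thesis .
  qed
  ultimately show ?thesis
    using M by (simp add: vertex_lp_feasible_def ambiguity_set_def)
qed

lemma integral_le_expected_vertex_average:
  assumes M: "M \<in> ambiguity_set xL xU gL gU" and "\<forall>i. xL$i \<le> xU$i"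
    and f: "f \<in> borel_measurable borel" "convex_on (Xi_box xL xU) f"
  shows "(\<integral>xi. f xi \<partial>M) \<le> (\<Sum>z\<in>UNIV. (\<integral>xi. vertex_weight xL xU z xi \<partial>M) * f (vertex xL xU z))"
proof -
  obtain K where "\<forall>xi\<in>Xi_box xL xU. \<bar>f xi\<bar> \<le> K"
    using convex_on_Xi_box_bounded[OF f(2) assms(2)] .
  then have "integrable M f"
    using integrable_ambiguity_set[OF M f(1)] by blast
  moreover have "AE xi in M. xi \<in> Xi_box xL xU"
    using M by (simp add: ambiguity_set_def)
  ultimately have "(\<integral>xi. f xi \<partial>M) \<le> (\<integral>xi. (\<Sum>z\<in>UNIV. vertex_weight xL xU z xi * f (vertex xL xU z)) \<partial>M)"
    using convex_on_Xi_box_le_vertex_average[OF f(2) assms(2)]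
    by (intro integral_mono_AE) (auto simp: integrable_vertex_weight[OF M] elim!: AE_mp)
  also have "\<dots> = (\<Sum>z\<in>UNIV. (\<integral>xi. vertex_weight xL xU z xi \<partial>M) * f (vertex xL xU z))"
    by (simp add: integrable_vertex_weight[OF M])
  finally show ?thesis .
qed

definition vertex_distribution ::
  "real^'i::finite \<Rightarrow> real^'i \<Rightarrow> (('i \<Rightarrow> bool) \<Rightarrow> real) \<Rightarrow> (real^'i) measure" where
  "vertex_distribution xL xU P = distr (measure_pmf (embed_pmf P)) borel (vertex xL xU)"

lemma
  assumes "\<forall>z. 0 \<le> P z" "(\<Sum>z\<in>UNIV. P z) = 1"
  shows prob_space_vertex_distribution: "prob_space (vertex_distribution xL xU P)"
    and integral_vertex_distribution: "g \<in> borel_measurable borel \<Longrightarrow>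
      (\<integral>xi. g xi \<partial>vertex_distribution xL xU P) = (\<Sum>z\<in>UNIV. P z * g (vertex xL xU z))"
proof -
  have pmf: "pmf (embed_pmf P) z = P z" for z
    using assms by (intro pmf_embed_pmf) (simp_all add: nn_integral_count_space_finite)
  show "prob_space (vertex_distribution xL xU P)"
    unfolding vertex_distribution_def
    by (intro prob_space.prob_space_distr prob_space_measure_pmf) simp
  assume g: "g \<in> borel_measurable borel"
  have "(\<integral>xi. g xi \<partial>vertex_distribution xL xU P) = (\<integral>z. g (vertex xL xU z) \<partial>measure_pmf (embed_pmf P))"
    unfolding vertex_distribution_def by (rule integral_distr) (simp_all add: g)
  also have "\<dots> = (\<Sum>z\<in>UNIV. g (vertex xL xU z) * pmf (embed_pmf P) z)"
    by (rule integral_measure_pmf_real) auto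
  finally show "(\<integral>xi. g xi \<partial>vertex_distribution xL xU P) = (\<Sum>z\<in>UNIV. P z * g (vertex xL xU z))"
    by (simp add: pmf mult.commute)
qed

lemma vertex_distribution_in_ambiguity_set:
  assumes "vertex_lp_feasible xL xU gL gU P" "\<forall>i. xL$i \<le> xU$i"
  shows "vertex_distribution xL xU P \<in> ambiguity_set xL xU gL gU"
proof -
  have P: "\<forall>z. 0 \<le> P z" "(\<Sum>z\<in>UNIV. P z) = 1"
    using assms(1) by (simp_all add: vertex_lp_feasible_def)
  have "AE xi in vertex_distribution xL xU P. xi \<in> Xi_box xL xU"
    unfolding vertex_distribution_def using vertex_in_Xi_box[OF assms(2)]
    by (subst AE_distr_iff) (auto simp: Xi_box_eq_cbox)
  moreover have "(\<integral>xi. xi $ i \<partial>vertex_distribution xL xU P) = (\<Sum>z\<in>UNIV. P z * vertex xL xU z $ i)" for i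
    by (rule integral_vertex_distribution[OF P]) (intro borel_measurable_continuous_onI continuous_intros)
  moreover have "sets (vertex_distribution xL xU P) = sets borel"
    by (simp add: vertex_distribution_def)
  ultimately show ?thesis
    using assms(1) prob_space_vertex_distribution[OF P]
    by (simp add: ambiguity_set_def vertex_lp_feasible_def)
qed

theorem worst_case_eq_vertex_lp:
  fixes f :: "real^'i::finite \<Rightarrow> real"
  assumes le: "\<forall>i. xL$i \<le> xU$i"
    and f: "f \<in> borel_measurable borel" "convex_on (Xi_box xL xU) f"
    and nonempty: "ambiguity_set xL xU gL gU \<noteq> {}"
  shows "worst_case f (ambiguity_set xL xU gL gU) = vertex_lp f xL xU gL gU"
proof -
  define A where "A = (\<lambda>M. \<integral>xi. f xi \<partial>M) ` ambiguity_set xL xU gL gU"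
  define B where "B = {(\<Sum>z\<in>UNIV. P z * f (vertex xL xU z)) | P. vertex_lp_feasible xL xU gL gU P}"
  have A_le_B: "\<exists>b\<in>B. a \<le> b" if "a \<in> A" for a
  proof -
    obtain M where M: "M \<in> ambiguity_set xL xU gL gU" and a: "a = (\<integral>xi. f xi \<partial>M)"
      using \<open>a \<in> A\<close> unfolding A_def by blast
    let ?P = "\<lambda>z. \<integral>xi. vertex_weight xL xU z xi \<partial>M"
    have "(\<Sum>z\<in>UNIV. ?P z * f (vertex xL xU z)) \<in> B"
      unfolding B_def mem_Collect_eq
      by (rule exI[of _ ?P]) (simp add: vertex_lp_feasible_expected_vertex_weight[OF M])
    then show ?thesis
      unfolding a using integral_le_expected_vertex_average[OF M le f] by blast
  qed
  have B_subset_A: "B \<subseteq> A"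
  proof
    fix b assume "b \<in> B"
    then obtain P where P: "vertex_lp_feasible xL xU gL gU P"
      and b: "b = (\<Sum>z\<in>UNIV. P z * f (vertex xL xU z))"
      unfolding B_def by blast
    have "(\<integral>xi. f xi \<partial>vertex_distribution xL xU P) = b"
      using P by (simp add: b integral_vertex_distribution f(1) vertex_lp_feasible_def)
    then show "b \<in> A"
      unfolding A_def using vertex_distribution_in_ambiguity_set[OF P le] by blast
  qed
  obtain K where K: "\<forall>b\<in>B. b \<le> K"
    unfolding B_def using vertex_lp_objective_le by blast
  have "A \<noteq> {}" "B \<noteq> {}"
    using nonempty A_le_B unfolding A_def by blast+
  moreover have "bdd_above B" "bdd_above A"
    using K A_le_B by (force intro: bdd_aboveI[where M=K])+
  ultimately have "Sup A = Sup B"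
    using A_le_B B_subset_A by (intro antisym cSup_mono cSup_subset_mono)
  then show ?thesis
    by (simp add: worst_case_def vertex_lp_eq_Sup_feasible A_def B_def)
qed

theorem corollary1:
  fixes CY :: "'y::finite \<Rightarrow> real" and BY :: "'r::finite \<Rightarrow> 'y \<Rightarrow> real"
    and Bxi :: "'r \<Rightarrow> ('k::finite \<times> 't::finite) \<Rightarrow> real"
    and BX :: "'r \<Rightarrow> 'x::finite \<Rightarrow> real" and d :: "'r \<Rightarrow> real" and Xstar :: "'x \<Rightarrow> real"
    and xL xU gL gU :: "real^('k \<times> 't)"
  assumes "\<forall>i. xL $ i \<le> xU $ i"
    and "\<forall>i. gL $ i \<le> gU $ i"
    and "\<forall>xi\<in>Xi_box xL xU. \<bar>recourse CY BY Bxi BX d Xstar xi\<bar> \<noteq> \<infinity>"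
    and "ambiguity_set xL xU gL gU \<noteq> {}"
  shows "worst_case (\<lambda>xi. real_of_ereal (recourse CY BY Bxi BX d Xstar xi)) (ambiguity_set xL xU gL gU)
       = vertex_lp (\<lambda>xi. real_of_ereal (recourse CY BY Bxi BX d Xstar xi)) xL xU gL gU"
proof (rule worst_case_eq_vertex_lp[OF assms(1) _ _ assms(4)])
  show "(\<lambda>xi. real_of_ereal (recourse CY BY Bxi BX d Xstar xi)) \<in> borel_measurable borel"
    by (rule borel_measurable_recourse)
  show "convex_on (Xi_box xL xU) (\<lambda>xi. real_of_ereal (recourse CY BY Bxi BX d Xstar xi))"
    using assms(3) by (intro convex_on_recourse) (simp_all add: Xi_box_eq_cbox)
qed

end
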